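(* Assume the penalty $g$ satisfies A1–A3. Then for every $X=[x_1,\dots,x_n]\in\mathbb{R}^{m\times n}$ and $D\in\mathbb{R}^{m\times d}$, the constants $L_X(D)$, $C_X(D)$ defined with the norm $\|\cdot\|=\|\cdot\|_{1\to2}$ (and $C=1$) satisfy $$L_X(D)\le\frac1n\sum_{i=1}^n\sqrt{2f_{x_i}(D)}\,\bar g(f_{x_i}(D)),\qquad C_X(D)\le\frac1{2n}\sum_{i=1}^n\big[\bar g(f_{x_i}(D))\big]^2.$$
   Context: A penalty is a function $g:\mathbb{R}^d\to\mathbb{R}\cup\{+\infty\}$, not identically $+\infty$. A1: $g\ge0$; A2: $g$ lower semi-continuous; A3: $g(\alpha)\to+\infty$ as $\|\alpha\|\to\infty$. $\bar g(t)=\sup\{\|\alpha\|_1:\ g(\alpha)\le t\}$ ($\sup\emptyset=0$). $\mathcal{L}_x(D,\alpha)=\tfrac12\|x-D\alpha\|_2^2+g(\alpha)$, $f_x(D)=\inf_\alpha\mathcal{L}_x(D,\alpha)$. $\|\Delta\|_{1\to2}=\max_j\|\delta_j\|_2$, with dual norm $\|U\|_\star=\sup_{\|\Delta\|_{1\to2}\le1}\langle U,\Delta\rangle_F$. For $\epsilon>0$, $\mathfrak{A}_\epsilon(X,D)=\{A=[\alpha_1,\dots,\alpha_n]:\ \mathcal{L}_{x_i}(D,\alpha_i)\le f_{x_i}(D)+\epsilon\ \forall i\}$; $L_X(D)=\inf_{\epsilon>0}\sup_{A\in\mathfrak{A}_\epsilon(X,D)}\frac1n\|(X-DA)A^\top\|_\star$,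 $C_X(D)=\inf_{\epsilon>0}\sup_{A\in\mathfrak{A}_\epsilon(X,D)}\frac1{2n}\sum_i\|\alpha_i\|_1^2$. *)

theory Defs
  imports "HOL-Analysis.Analysis"
begin

definition lsc :: "('a::topological_space \<Rightarrow> ereal) \<Rightarrow> bool" where
  "lsc g \<longleftrightarrow> (\<forall>x. g x \<le> Liminf (at x) g)"

definition norm1 :: "real^'d \<Rightarrow> real" where
  "norm1 a = (\<Sum>j\<in>UNIV. \<bar>a $ j\<bar>)"

definition is_penalty :: "(real^'d \<Rightarrow> ereal) \<Rightarrow> bool" where
  "is_penalty g \<longleftrightarrow> (\<forall>a. g a \<noteq> -\<infinity>) \<and> (\<exists>a. g a \<noteq> \<infinity>)"

definition gbar :: "(real^'d \<Rightarrow> ereal) \<Rightarrow> ereal \<Rightarrow> ereal" where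
  "gbar g t = (if {a. g a \<le> t} = {} then 0 else (SUP a\<in>{a. g a \<le> t}. ereal (norm1 a)))"

definition Lx :: "(real^'d \<Rightarrow> ereal) \<Rightarrow> real^'m \<Rightarrow> real^'d^'m \<Rightarrow> real^'d \<Rightarrow> ereal" where
  "Lx g x D a = ereal ((1/2) * (norm (x - D *v a))\<^sup>2) + g a"

definition fx :: "(real^'d \<Rightarrow> ereal) \<Rightarrow> real^'m \<Rightarrow> real^'d^'m \<Rightarrow> ereal" where
  "fx g x D = (INF a. Lx g x D a)"

definition norm12 :: "real^'d^'m \<Rightarrow> real" where
  "norm12 Delta = Max (range (\<lambda>j. norm (column j Delta)))"

definition frob :: "real^'d^'m \<Rightarrow> real^'d^'m \<Rightarrow> real" where
  "frob U V = (\<Sum>i\<in>UNIV. \<Sum>j\<in>UNIV. U $ i $ j * V $ i $ j)"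

definition dualnorm12 :: "real^'d^'m \<Rightarrow> real" where
  "dualnorm12 U = (SUP Delta\<in>{Delta. norm12 Delta \<le> 1}. frob U Delta)"

definition Aeps :: "(real^'d \<Rightarrow> ereal) \<Rightarrow> real \<Rightarrow> real^'n^'m \<Rightarrow> real^'d^'m \<Rightarrow> (real^'n^'d) set" where
  "Aeps g eps X D = {A. \<forall>i. Lx g (column i X) D (column i A) \<le> fx g (column i X) D + ereal eps}"

definition LX :: "(real^'d \<Rightarrow> ereal) \<Rightarrow> real^'n^'m \<Rightarrow> real^'d^'m \<Rightarrow> ereal" where
  "LX g X D = (INF eps\<in>{0<..}. SUP A\<in>Aeps g eps X D.
     ereal (dualnorm12 ((X - D ** A) ** transpose A) / real CARD('n)))"

definition CX :: "(real^'d \<Rightarrow> ereal) \<Rightarrow> real^'n^'m \<Rightarrow> real^'d^'m \<Rightarrow> ereal" where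
  "CX g X D = (INF eps\<in>{0<..}. SUP A\<in>Aeps g eps X D.
     ereal ((\<Sum>i\<in>UNIV. (norm1 (column i A))\<^sup>2) / (2 * real CARD('n))))"

end

theory Submission
  imports Defs
begin

text \<open>If \<open>\<alpha>\<^sub>i\<close> is an \<open>\<epsilon>\<close>-approximate minimiser for \<open>x\<^sub>i\<close> and \<open>f\<^sub>i = f\<^sub>x\<^sub>i(D)\<close>, both terms of
  the objective are nonnegative, so \<open>g(\<alpha>\<^sub>i) \<le> f\<^sub>i + \<epsilon>\<close>, whence \<open>\<parallel>\<alpha>\<^sub>i\<parallel>\<^sub>1 \<le> gbar(f\<^sub>i + \<epsilon>)\<close>,
  and \<open>\<parallel>x\<^sub>i - D \<alpha>\<^sub>i\<parallel>\<^sub>2 \<le> sqrt(2(f\<^sub>i + \<epsilon>))\<close>. Bounding the dual \<open>1\<rightarrow>2\<close> norm column by column with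
  Cauchy-Schwarz, both suprema over the approximate minimisers are bounded by explicit functions
  of \<open>\<epsilon>\<close>. Letting \<open>\<epsilon> \<rightarrow> 0\<close> needs right-continuity of gbar: by A2 and A3 the sublevel sets
  of \<open>g\<close> are compact, so a decreasing nest of them cut down to \<open>\<parallel>\<alpha>\<parallel>\<^sub>1 \<ge> c\<close> has a common point.\<close>

lemma norm1_nonneg: "0 \<le> norm1 a"
  unfolding norm1_def by (simp add: sum_nonneg)

lemma norm1_le_card_mult_norm: "norm1 (a::real^'d) \<le> real CARD('d) * norm a"
proof -
  have "norm1 a \<le> (\<Sum>j\<in>(UNIV::'d set). norm a)"
    unfolding norm1_def by (rule sum_mono) (rule component_le_norm_cart)
  then show ?thesis by simp
qed

lemma continuous_on_norm1: "continuous_on S norm1"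
  unfolding norm1_def by (intro continuous_intros)

lemma closed_sublevel_lsc:
  fixes g :: "'a::topological_space \<Rightarrow> ereal"
  assumes "lsc g"
  shows "closed {x. g x \<le> c}"
  unfolding closed_def open_subopen[of "- {x. g x \<le> c}"]
proof (intro ballI)
  fix x assume "x \<in> - {x. g x \<le> c}"
  then have "c < g x" by simp
  moreover have "g x \<le> Liminf (at x) g" using assms unfolding lsc_def by blast
  ultimately have "eventually (\<lambda>y. c < g y) (at x)" by (simp add: le_Liminf_iff)
  then obtain S where "open S" "x \<in> S" "\<forall>y\<in>S. y \<noteq> x \<longrightarrow> c < g y"
    unfolding eventually_at_topological by blast
  with \<open>c < g x\<close> show "\<exists>T. open T \<and> x \<in> T \<and> T \<subseteq> - {x. g x \<le> c}"
    by (intro exI[of _ S]) (auto simp: not_le)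
qed

lemma bounded_sublevel_coercive:
  fixes g :: "'a::real_normed_vector \<Rightarrow> ereal"
  assumes "filterlim g (nhds \<infinity>) at_infinity"
  shows "bounded {x. g x \<le> ereal t}"
proof -
  have "eventually (\<lambda>x. ereal t < g x) at_infinity"
    using assms unfolding order_tendsto_iff by simp
  then obtain R where "\<forall>x. R \<le> norm x \<longrightarrow> ereal t < g x"
    unfolding eventually_at_infinity by blast
  then have "\<forall>x\<in>{x. g x \<le> ereal t}. norm x \<le> R"
    by (metis linorder_not_le mem_Collect_eq nle_le)
  then show ?thesis unfolding bounded_iff by blast
qed

lemma gbar_nonneg: "0 \<le> gbar g t"
proof (cases "{a. g a \<le> t} = {}")
  case False
  then obtain a where "g a \<le> t" by auto
  have "0 \<le> ereal (norm1 a)" using norm1_nonneg by simp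
  also have "\<dots> \<le> (SUP a\<in>{a. g a \<le> t}. ereal (norm1 a))"
    using \<open>g a \<le> t\<close> by (intro SUP_upper) auto
  finally show ?thesis using False unfolding gbar_def by simp
qed (simp add: gbar_def)

lemma gbar_upper: "g a \<le> t \<Longrightarrow> ereal (norm1 a) \<le> gbar g t"
  unfolding gbar_def by (auto intro!: SUP_upper)

lemma gbar_mono: "t \<le> s \<Longrightarrow> gbar g t \<le> gbar g s"
proof (cases "{a. g a \<le> t} = {}")
  case True
  then show ?thesis using gbar_nonneg[of g s] by (simp add: gbar_def)
next
  case False
  assume "t \<le> s"
  then have "{a. g a \<le> t} \<subseteq> {a. g a \<le> s}" by (auto intro: order.trans)
  with False show ?thesis unfolding gbar_def by (auto intro!: SUP_subset_mono)
qed

lemma less_gbarD: "ereal c < gbar g t \<Longrightarrow> 0 \<le> c \<Longrightarrow> \<exists>a. g a \<le> t \<and> c < norm1 a"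
  unfolding gbar_def by (auto split: if_splits simp: less_SUP_iff)

lemma gbar_finite:
  fixes g :: "real^'d \<Rightarrow> ereal"
  assumes "filterlim g (nhds \<infinity>) at_infinity"
  shows "\<bar>gbar g (ereal t)\<bar> \<noteq> \<infinity>"
proof -
  obtain R where R: "0 \<le> R" "\<And>a. g a \<le> ereal t \<Longrightarrow> norm a \<le> R"
    using bounded_sublevel_coercive[OF assms, of t] unfolding bounded_iff
    by (metis mem_Collect_eq norm_ge_zero order.trans linear)
  have "gbar g (ereal t) \<le> ereal (real CARD('d) * R)"
  proof (rule ccontr)
    assume "\<not> ?thesis"
    then obtain a where a: "g a \<le> ereal t" "real CARD('d) * R < norm1 a"
      using less_gbarD R(1) by (metis linorder_not_le mult_nonneg_nonneg of_nat_0_le_iff)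
    have "norm1 a \<le> real CARD('d) * R"
      using norm1_le_card_mult_norm[of a] R(2)[OF a(1)] by (simp add: mult_left_mono order.trans)
    with a(2) show False by simp
  qed
  then show ?thesis using gbar_nonneg[of g "ereal t"] by auto
qed

definition gbar_real :: "(real^'d \<Rightarrow> ereal) \<Rightarrow> real \<Rightarrow> real" where
  "gbar_real g t = real_of_ereal (gbar g (ereal t))"

lemma ereal_gbar_real:
  fixes g :: "real^'d \<Rightarrow> ereal"
  assumes "filterlim g (nhds \<infinity>) at_infinity"
  shows "ereal (gbar_real g t) = gbar g (ereal t)"
  unfolding gbar_real_def using gbar_finite[OF assms] by (simp add: ereal_real')

lemma gbar_real_mono:
  fixes g :: "real^'d \<Rightarrow> ereal"
  assumes "filterlim g (nhds \<infinity>) at_infinity" and "s \<le> t"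
  shows "gbar_real g s \<le> gbar_real g t"
  using gbar_mono[of "ereal s" "ereal t" g] assms(2)
  by (simp flip: ereal_gbar_real[OF assms(1)])

lemma gbar_real_right_continuous:
  fixes g :: "real^'d \<Rightarrow> ereal"
  assumes lsc: "lsc g" and coercive: "filterlim g (nhds \<infinity>) at_infinity" and "0 < \<delta>"
  shows "\<exists>e>0. gbar_real g (t + e) \<le> gbar_real g t + \<delta>"
proof (rule ccontr)
  assume H: "\<not> ?thesis"
  define c where "c = gbar_real g t"
  have "0 \<le> c"
    using gbar_nonneg[of g "ereal t"] unfolding c_def by (simp flip: ereal_gbar_real[OF coercive])
  define S where "S n = {a. g a \<le> ereal (t + inverse (real (Suc n)))} \<inter> {a. c + \<delta> \<le> norm1 a}" for n
  have "closed (S n)" for n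
    unfolding S_def
    by (intro closed_Int closed_sublevel_lsc[OF lsc] closed_Collect_le continuous_on_const continuous_on_norm1)
  moreover have "S n \<noteq> {}" for n
  proof -
    have "c + \<delta> < gbar_real g (t + inverse (real (Suc n)))"
      using H unfolding c_def by (metis inverse_positive_iff_positive linorder_not_le of_nat_0_less_iff zero_less_Suc)
    then have "ereal (c + \<delta>) < gbar g (ereal (t + inverse (real (Suc n))))"
      by (simp flip: ereal_gbar_real[OF coercive])
    then show ?thesis
      using less_gbarD \<open>0 \<le> c\<close> \<open>0 < \<delta>\<close> unfolding S_def by (force intro: less_imp_le)
  qed
  moreover have "S n \<subseteq> S m" if "m \<le> n" for m n
  proof -
    have "inverse (real (Suc n)) \<le> inverse (real (Suc m))"
      using that by (simp add: le_imp_inverse_le)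
    then show ?thesis unfolding S_def by (auto intro: order.trans)
  qed
  moreover have "bounded (S 0)"
    by (rule bounded_subset[OF bounded_sublevel_coercive[OF coercive, of "t + 1"]]) (auto simp: S_def)
  ultimately obtain a where a: "\<And>n. a \<in> S n" using bounded_closed_nest[of S] by blast
  have "(\<lambda>n. ereal (t + inverse (real (Suc n)))) \<longlonglongrightarrow> ereal (t + 0)"
    by (intro tendsto_ereal tendsto_add tendsto_const LIMSEQ_inverse_real_of_nat)
  moreover have "g a \<le> ereal (t + inverse (real (Suc n)))" for n
    using a[of n] by (simp add: S_def)
  ultimately have "g a \<le> ereal (t + 0)"
    by (intro LIMSEQ_le_const[of _ _ "g a"]) blast+
  then have "ereal (norm1 a) \<le> ereal c"
    unfolding add_0_right c_def ereal_gbar_real[OF coercive] by (rule gbar_upper)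
  with a[of 0] \<open>0 < \<delta>\<close> show False by (simp add: S_def)
qed

lemma tendsto_gbar_real_at_right:
  fixes g :: "real^'d \<Rightarrow> ereal"
  assumes lsc: "lsc g" and coercive: "filterlim g (nhds \<infinity>) at_infinity"
  shows "((\<lambda>e. gbar_real g (t + e)) \<longlongrightarrow> gbar_real g t) (at_right 0)"
  unfolding order_tendsto_iff
proof (intro conjI allI impI)
  fix a assume "a < gbar_real g t"
  moreover have "gbar_real g t \<le> gbar_real g (t + e)" if "0 < e" for e
    using that by (intro gbar_real_mono[OF coercive]) simp
  ultimately show "eventually (\<lambda>e. a < gbar_real g (t + e)) (at_right 0)"
    unfolding eventually_at_right_field by (intro exI[of _ 1]) (auto intro: less_le_trans)
next
  fix b assume b: "gbar_real g t < b"
  then obtain e0 where e0: "0 < e0" "gbar_real g (t + e0) \<le> gbar_real g t + (b - gbar_real g t) / 2"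
    using gbar_real_right_continuous[OF lsc coercive, of "(b - gbar_real g t) / 2"] by auto
  have "gbar_real g (t + e) < b" if "0 < e" "e < e0" for e
  proof -
    have "gbar_real g (t + e) \<le> gbar_real g (t + e0)"
      using that by (intro gbar_real_mono[OF coercive]) simp
    with e0(2) b show ?thesis by argo
  qed
  then show "eventually (\<lambda>e. gbar_real g (t + e) < b) (at_right 0)"
    unfolding eventually_at_right_field using e0(1) by blast
qed

lemma sum_swap3:
  "(\<Sum>k\<in>K. \<Sum>j\<in>J. \<Sum>i\<in>I. f k j i) = (\<Sum>i\<in>I. \<Sum>j\<in>J. \<Sum>k\<in>K. (f k j i :: 'a::comm_monoid_add))"
proof -
  have "(\<Sum>k\<in>K. \<Sum>j\<in>J. \<Sum>i\<in>I. f k j i) = (\<Sum>k\<in>K. \<Sum>i\<in>I. \<Sum>j\<in>J. f k j i)"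
    by (rule sum.cong[OF refl], rule sum.swap)
  also have "\<dots> = (\<Sum>i\<in>I. \<Sum>k\<in>K. \<Sum>j\<in>J. f k j i)" by (rule sum.swap)
  also have "\<dots> = (\<Sum>i\<in>I. \<Sum>j\<in>J. \<Sum>k\<in>K. f k j i)"
    by (rule sum.cong[OF refl], rule sum.swap)
  finally show ?thesis .
qed

lemma frob_mult_transpose:
  fixes R :: "real^'n^'m" and A :: "real^'n^'d" and Delta :: "real^'d^'m"
  shows "frob (R ** transpose A) Delta = (\<Sum>i\<in>UNIV. \<Sum>j\<in>UNIV. A$j$i * (column i R \<bullet> column j Delta))"
proof -
  have "frob (R ** transpose A) Delta = (\<Sum>k\<in>UNIV. \<Sum>j\<in>UNIV. \<Sum>i\<in>UNIV. R$k$i * A$j$i * Delta$k$j)"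
    by (simp add: frob_def matrix_matrix_mult_def transpose_def sum_distrib_right)
  also have "\<dots> = (\<Sum>i\<in>UNIV. \<Sum>j\<in>UNIV. \<Sum>k\<in>UNIV. R$k$i * A$j$i * Delta$k$j)"
    by (rule sum_swap3)
  also have "\<dots> = (\<Sum>i\<in>UNIV. \<Sum>j\<in>UNIV. A$j$i * (column i R \<bullet> column j Delta))"
    by (simp add: inner_vec_def column_def sum_distrib_left mult_ac)
  finally show ?thesis .
qed

lemma norm_column_le_norm12: "norm (column j Delta) \<le> norm12 Delta"
  unfolding norm12_def by (rule Max_ge) simp_all

lemma dualnorm12_mult_transpose_le:
  fixes R :: "real^'n^'m" and A :: "real^'n^'d"
  shows "dualnorm12 (R ** transpose A) \<le> (\<Sum>i\<in>UNIV. norm (column i R) * norm1 (column i A))"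
  unfolding dualnorm12_def
proof (rule cSUP_least)
  have "norm12 (0::real^'d^'m) = 0"
    unfolding norm12_def by (simp add: column_def zero_vec_def[symmetric])
  then show "{Delta::real^'d^'m. norm12 Delta \<le> 1} \<noteq> {}"
    by (metis (mono_tags) empty_Collect_eq zero_less_one_class.zero_le_one)
next
  fix Delta :: "real^'d^'m" assume "Delta \<in> {Delta. norm12 Delta \<le> 1}"
  then have col_le_1: "norm (column j Delta) \<le> 1" for j
    using norm_column_le_norm12[of j Delta] by simp
  have "frob (R ** transpose A) Delta = (\<Sum>i\<in>UNIV. \<Sum>j\<in>UNIV. A$j$i * (column i R \<bullet> column j Delta))"
    by (rule frob_mult_transpose)
  also have "\<dots> \<le> (\<Sum>i\<in>UNIV. \<Sum>j\<in>UNIV. \<bar>A$j$i\<bar> * norm (column i R))"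
  proof (intro sum_mono)
    fix i j
    have "A$j$i * (column i R \<bullet> column j Delta) \<le> \<bar>A$j$i\<bar> * \<bar>column i R \<bullet> column j Delta\<bar>"
      by (metis abs_ge_self abs_mult)
    also have "\<dots> \<le> \<bar>A$j$i\<bar> * (norm (column i R) * norm (column j Delta))"
      by (intro mult_left_mono Cauchy_Schwarz_ineq2) simp
    also have "\<dots> \<le> \<bar>A$j$i\<bar> * norm (column i R)"
      using mult_left_le[OF col_le_1 norm_ge_zero] by (intro mult_left_mono) simp_all
    finally show "A$j$i * (column i R \<bullet> column j Delta) \<le> \<bar>A$j$i\<bar> * norm (column i R)" .
  qed
  also have "\<dots> = (\<Sum>i\<in>UNIV. norm (column i R) * norm1 (column i A))"
    by (simp add: norm1_def sum_distrib_left column_def mult_ac)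
  finally show "frob (R ** transpose A) Delta \<le> (\<Sum>i\<in>UNIV. norm (column i R) * norm1 (column i A))" .
qed

lemma column_residual: "column i (X - D ** A) = column i X - D *v column i A"
  by (simp add: vec_eq_iff column_def matrix_matrix_mult_def matrix_vector_mult_def)

lemma fx_nonneg_finite:
  assumes "is_penalty g" and nonneg: "\<forall>a. 0 \<le> g a"
  shows "0 \<le> fx g x D" and "fx g x D \<noteq> \<infinity>"
proof -
  show "0 \<le> fx g x D"
    unfolding fx_def Lx_def using nonneg by (intro INF_greatest) simp
  obtain a where a: "g a \<noteq> \<infinity>" using assms(1) unfolding is_penalty_def by blast
  have "fx g x D \<le> Lx g x D a" unfolding fx_def by (rule INF_lower) simp
  also have "\<dots> < \<infinity>" unfolding Lx_def using a nonneg by (cases "g a") auto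
  finally show "fx g x D \<noteq> \<infinity>" by simp
qed

lemma Aeps_column_bounds:
  fixes g :: "real^'d \<Rightarrow> ereal" and X :: "real^'n^'m" and D :: "real^'d^'m"
  assumes nonneg: "\<forall>a. 0 \<le> g a"
    and A: "A \<in> Aeps g e X D"
    and F: "fx g (column i X) D = ereal f"
  shows "g (column i A) \<le> ereal (f + e)"
    and "norm (column i X - D *v column i A) \<le> sqrt (2 * (f + e))"
proof -
  define q where "q = (1/2) * (norm (column i X - D *v column i A))\<^sup>2"
  have "Lx g (column i X) D (column i A) \<le> fx g (column i X) D + ereal e"
    using A unfolding Aeps_def by blast
  then have L: "ereal q + g (column i A) \<le> ereal (f + e)"
    unfolding F Lx_def q_def by simp
  have "g (column i A) \<le> ereal q + g (column i A)"
    unfolding q_def by (intro add_increasing) auto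
  then show "g (column i A) \<le> ereal (f + e)" using L by (rule order.trans)
  have "ereal q \<le> ereal q + g (column i A)"
    using nonneg by (intro add_increasing2) auto
  then have "ereal q \<le> ereal (f + e)" using L by (rule order.trans)
  then have "(norm (column i X - D *v column i A))\<^sup>2 \<le> 2 * (f + e)"
    unfolding q_def by simp
  then show "norm (column i X - D *v column i A) \<le> sqrt (2 * (f + e))"
    by (simp add: real_le_rsqrt)
qed

lemma norm1_column_Aeps_le:
  fixes g :: "real^'d \<Rightarrow> ereal" and X :: "real^'n^'m" and D :: "real^'d^'m"
  assumes nonneg: "\<forall>a. 0 \<le> g a" and coercive: "filterlim g (nhds \<infinity>) at_infinity"
    and A: "A \<in> Aeps g e X D" and F: "fx g (column i X) D = ereal f"
  shows "norm1 (column i A) \<le> gbar_real g (f + e)"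
  using gbar_upper[of g "column i A", OF Aeps_column_bounds(1)[OF nonneg A F]]
  by (simp flip: ereal_gbar_real[OF coercive])

lemma LX_le:
  fixes g :: "real^'d \<Rightarrow> ereal" and X :: "real^'n^'m" and D :: "real^'d^'m"
  assumes nonneg: "\<forall>a. 0 \<le> g a" and coercive: "filterlim g (nhds \<infinity>) at_infinity"
    and F: "\<And>i. fx g (column i X) D = ereal (f i)" and f: "\<And>i. 0 \<le> f i" and "0 < e"
  shows "LX g X D \<le> ereal ((\<Sum>i\<in>UNIV. sqrt (2 * (f i + e)) * gbar_real g (f i + e)) / real CARD('n))"
proof -
  have "LX g X D \<le> (SUP A\<in>Aeps g e X D. ereal (dualnorm12 ((X - D ** A) ** transpose A) / real CARD('n)))"
    unfolding LX_def by (rule INF_lower) (simp add: \<open>0 < e\<close>)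
  also have "\<dots> \<le> ereal ((\<Sum>i\<in>UNIV. sqrt (2 * (f i + e)) * gbar_real g (f i + e)) / real CARD('n))"
  proof (intro SUP_least ereal_less_eq(3)[THEN iffD2] divide_right_mono of_nat_0_le_iff)
    fix A assume A: "A \<in> Aeps g e X D"
    have "dualnorm12 ((X - D ** A) ** transpose A)
        \<le> (\<Sum>i\<in>UNIV. norm (column i X - D *v column i A) * norm1 (column i A))"
      using dualnorm12_mult_transpose_le[of "X - D ** A" A] by (simp add: column_residual)
    also have "\<dots> \<le> (\<Sum>i\<in>UNIV. sqrt (2 * (f i + e)) * gbar_real g (f i + e))"
      using f \<open>0 < e\<close>
      by (intro sum_mono mult_mono Aeps_column_bounds(2)[OF nonneg A F]
          norm1_column_Aeps_le[OF nonneg coercive A F] norm1_nonneg) simp_all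
    finally show "dualnorm12 ((X - D ** A) ** transpose A)
        \<le> (\<Sum>i\<in>UNIV. sqrt (2 * (f i + e)) * gbar_real g (f i + e))" .
  qed
  finally show ?thesis .
qed

lemma CX_le:
  fixes g :: "real^'d \<Rightarrow> ereal" and X :: "real^'n^'m" and D :: "real^'d^'m"
  assumes nonneg: "\<forall>a. 0 \<le> g a" and coercive: "filterlim g (nhds \<infinity>) at_infinity"
    and F: "\<And>i. fx g (column i X) D = ereal (f i)" and "0 < e"
  shows "CX g X D \<le> ereal ((\<Sum>i\<in>UNIV. (gbar_real g (f i + e))\<^sup>2) / (2 * real CARD('n)))"
proof -
  have "CX g X D \<le> (SUP A\<in>Aeps g e X D. ereal ((\<Sum>i\<in>UNIV. (norm1 (column i A))\<^sup>2) / (2 * real CARD('n))))"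
    unfolding CX_def by (rule INF_lower) (simp add: \<open>0 < e\<close>)
  also have "\<dots> \<le> ereal ((\<Sum>i\<in>UNIV. (gbar_real g (f i + e))\<^sup>2) / (2 * real CARD('n)))"
    by (intro SUP_least ereal_less_eq(3)[THEN iffD2] divide_right_mono sum_mono power_mono
        norm1_column_Aeps_le[OF nonneg coercive _ F] norm1_nonneg) simp_all
  finally show ?thesis .
qed

lemma ereal_le_of_tendsto_at_right:
  fixes h :: "real \<Rightarrow> real"
  assumes "\<And>e. 0 < e \<Longrightarrow> x \<le> ereal (h e)" and "(h \<longlongrightarrow> l) (at_right 0)"
  shows "x \<le> ereal l"
proof (rule tendsto_le[OF trivial_limit_at_right_real])
  show "((\<lambda>e. ereal (h e)) \<longlongrightarrow> ereal l) (at_right 0)" using assms(2) by (rule tendsto_ereal)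
  show "eventually (\<lambda>e. x \<le> ereal (h e)) (at_right 0)"
    using assms(1) eventually_at_right_less by (rule eventually_mono[rotated])
qed (rule tendsto_const)

theorem mainTheorem6:
  fixes g :: "real^'d \<Rightarrow> ereal" and X :: "real^'n^'m" and D :: "real^'d^'m"
  assumes "is_penalty g"
    and A1: "\<forall>a. g a \<ge> 0"
    and A2: "lsc g"
    and A3: "filterlim g (nhds \<infinity>) at_infinity"
  shows "LX g X D \<le> ereal (1 / real CARD('n)) *
           (\<Sum>i\<in>UNIV. ereal (sqrt (2 * real_of_ereal (fx g (column i X) D))) * gbar g (fx g (column i X) D))
     \<and> CX g X D \<le> ereal (1 / (2 * real CARD('n))) *
           (\<Sum>i\<in>UNIV. (gbar g (fx g (column i X) D))\<^sup>2)"
proof -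
  define f where "f i = real_of_ereal (fx g (column i X) D)" for i
  have F: "fx g (column i X) D = ereal (f i)" and f: "0 \<le> f i" for i
    using fx_nonneg_finite[OF assms(1) A1, of "column i X" D]
    unfolding f_def by (auto simp: ereal_real real_of_ereal_pos)
  have gbar_lim: "((\<lambda>e. gbar_real g (f i + e)) \<longlongrightarrow> gbar_real g (f i)) (at_right 0)" for i
    by (rule tendsto_gbar_real_at_right[OF A2 A3])
  have "LX g X D \<le> ereal ((\<Sum>i\<in>UNIV. sqrt (2 * (f i + 0)) * gbar_real g (f i)) / real CARD('n))"
    by (rule ereal_le_of_tendsto_at_right, rule LX_le[OF A1 A3 F f], assumption)
      (intro tendsto_intros gbar_lim, simp)
  moreover have "CX g X D \<le> ereal ((\<Sum>i\<in>UNIV. (gbar_real g (f i))\<^sup>2) / (2 * real CARD('n)))"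
    by (rule ereal_le_of_tendsto_at_right, rule CX_le[OF A1 A3 F], assumption)
      (intro tendsto_intros gbar_lim, simp)
  ultimately show ?thesis
    by (simp add: F sum_ereal flip: ereal_gbar_real[OF A3])
qed

end
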